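(* Let $\alpha=\alpha^m:[m]\to\mathbb N$ be a positional satisfaction function with $\alpha(1)\ge\alpha(2)\ge\dots\ge\alpha(m)$. Then for every instance of $\alpha$-SU-Monroe (with $K\le m$), Algorithm GM outputs a Monroe $K$-assignment $\Phi$ with $\ell_1^\alpha(\Phi)\ge(1-\frac1e)\cdot\mathrm{OPT}$, where $\mathrm{OPT}$ is the maximum of $\ell_1^\alpha$ over all Monroe $K$-assignments.
   Context: Agents $N=[n]$, alternatives $A=\{a_1,\dots,a_m\}$; each agent $i$ has a strict linear order on $A$, $\mathrm{pos}_i(a)$ the position of $a$ ($1$ = best). $\ell_1^\alpha(\Phi)=\sum_{i}\alpha(\mathrm{pos}_i(\Phi(i)))$, where an agent left unassigned (assigned the null alternative $\bot$) is treated as having $\mathrm{pos}_i(\bot)=m$. A Monroe $K$-assignment is $\Phi:N\to A$ with $|\Phi(N)|\le K$ and $|\Phi^{-1}(a)|\le\lceil n/K\rceil$ for all $a$. For $S\subseteq A$ with $|S|\le K$, $\Phi^S_\alpha$ is a partial assignment (each agent mapped to an element of $S$ or to $\bot$) with each $a\in S$ receiving at most $\lceil n/K\rceil$ agents, maximizing $\ell_1^\alpha$ among such partial assignments. Algorithm GM: set $S=\emptyset$; for $K$ iterations, choose $a\in A\setminus S$ maximizing $\ell_1^\alpha(\Phi^{S\cup\{a\}}_\alpha)$ and add it to $S$; output $\Phi^S_\alpha$. *)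

theory Defs
  imports Complex_Main
begin

text \<open>The preference of agent i is
given by its position function pos i, a bijection from A onto {1..m} (1 = best).
A partial assignment maps agents to 'a option, None being the null alternative.\<close>

definition capacity :: "nat \<Rightarrow> nat \<Rightarrow> nat" where
  "capacity n K = nat \<lceil>real n / real K\<rceil>"

definition valid_profile :: "'v set \<Rightarrow> 'a set \<Rightarrow> ('v \<Rightarrow> 'a \<Rightarrow> nat) \<Rightarrow> bool" where
  "valid_profile N A pos \<longleftrightarrow> finite N \<and> finite A \<and>
     (\<forall>i\<in>N. bij_betw (pos i) A {1..card A})"

definition sat :: "(nat \<Rightarrow> nat) \<Rightarrow> nat \<Rightarrow> ('v \<Rightarrow> 'a \<Rightarrow> nat) \<Rightarrow> 'v \<Rightarrow> 'a option \<Rightarrow> nat" where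
  "sat \<alpha> m pos i x = (case x of None \<Rightarrow> \<alpha> m | Some a \<Rightarrow> \<alpha> (pos i a))"

definition ell1 :: "'v set \<Rightarrow> (nat \<Rightarrow> nat) \<Rightarrow> nat \<Rightarrow> ('v \<Rightarrow> 'a \<Rightarrow> nat) \<Rightarrow> ('v \<Rightarrow> 'a option) \<Rightarrow> nat" where
  "ell1 N \<alpha> m pos \<Phi> = (\<Sum>i\<in>N. sat \<alpha> m pos i (\<Phi> i))"

definition monroe_assignment :: "'v set \<Rightarrow> 'a set \<Rightarrow> nat \<Rightarrow> ('v \<Rightarrow> 'a) \<Rightarrow> bool" where
  "monroe_assignment N A K \<Phi> \<longleftrightarrow> (\<forall>i\<in>N. \<Phi> i \<in> A) \<and> card (\<Phi> ` N) \<le> K \<and>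
     (\<forall>a\<in>A. card {i\<in>N. \<Phi> i = a} \<le> capacity (card N) K)"

definition partial_assignment :: "'v set \<Rightarrow> 'a set \<Rightarrow> nat \<Rightarrow> ('v \<Rightarrow> 'a option) \<Rightarrow> bool" where
  "partial_assignment N S K \<Phi> \<longleftrightarrow> (\<forall>i\<in>N. \<Phi> i = None \<or> (\<exists>a\<in>S. \<Phi> i = Some a)) \<and>
     (\<forall>a\<in>S. card {i\<in>N. \<Phi> i = Some a} \<le> capacity (card N) K)"

definition optimal_partial :: "'v set \<Rightarrow> 'a set \<Rightarrow> ('v \<Rightarrow> 'a \<Rightarrow> nat) \<Rightarrow> (nat \<Rightarrow> nat) \<Rightarrow> nat
    \<Rightarrow> 'a set \<Rightarrow> ('v \<Rightarrow> 'a option) \<Rightarrow> bool" where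
  "optimal_partial N A pos \<alpha> K S \<Phi> \<longleftrightarrow> partial_assignment N S K \<Phi> \<and>
     (\<forall>\<Psi>. partial_assignment N S K \<Psi> \<longrightarrow>
        ell1 N \<alpha> (card A) pos \<Psi> \<le> ell1 N \<alpha> (card A) pos \<Phi>)"

definition greedy_choice :: "'v set \<Rightarrow> 'a set \<Rightarrow> ('v \<Rightarrow> 'a \<Rightarrow> nat) \<Rightarrow> (nat \<Rightarrow> nat) \<Rightarrow> nat
    \<Rightarrow> 'a set \<Rightarrow> 'a \<Rightarrow> bool" where
  "greedy_choice N A pos \<alpha> K S a \<longleftrightarrow> a \<in> A - S \<and>
     (\<exists>\<Phi>. optimal_partial N A pos \<alpha> K (S \<union> {a}) \<Phi> \<and>
        (\<forall>b\<in>A - S. \<forall>\<Psi>. partial_assignment N (S \<union> {b}) K \<Psi> \<longrightarrow>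
            ell1 N \<alpha> (card A) pos \<Psi> \<le> ell1 N \<alpha> (card A) pos \<Phi>))"

text \<open>A run of algorithm GM (with arbitrary tie-breaking) that chooses alternatives xs
(in this order) and outputs Phi.\<close>
definition gm_run :: "'v set \<Rightarrow> 'a set \<Rightarrow> ('v \<Rightarrow> 'a \<Rightarrow> nat) \<Rightarrow> (nat \<Rightarrow> nat) \<Rightarrow> nat
    \<Rightarrow> 'a list \<Rightarrow> ('v \<Rightarrow> 'a option) \<Rightarrow> bool" where
  "gm_run N A pos \<alpha> K xs \<Phi> \<longleftrightarrow> length xs = K \<and>
     (\<forall>j<K. greedy_choice N A pos \<alpha> K (set (take j xs)) (xs ! j)) \<and>
     optimal_partial N A pos \<alpha> K (set xs) \<Phi>"

end

theory Submission
  imports Defs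
begin

text \<open>Write \<open>v(S)\<close> for the optimal value of a partial assignment to \<open>S\<close>. If \<open>\<Phi>\<close> is optimal
for \<open>S\<close> and \<open>\<Psi>\<close> is any partial assignment to \<open>S \<union> B\<close>, then for \<open>b \<in> B\<close> an alternating-path
argument yields a set \<open>P\<close> of agents such that swapping \<open>\<Phi>\<close> and \<open>\<Psi>\<close> on \<open>P\<close> gives a partial
assignment to \<open>S \<union> {b}\<close> and one to \<open>S \<union> (B - {b})\<close>, with the same total value as \<open>\<Phi>\<close> and \<open>\<Psi>\<close>.
Induction over \<open>B\<close> then gives \<open>v(S \<union> B) - v(S) \<le> |B| \<cdot> max\<^sub>b (v(S \<union> {b}) - v(S))\<close>.
Taking for \<open>B\<close> the at most \<open>K\<close> alternatives used by an optimal Monroe assignment, each greedy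
step closes at least a \<open>1/K\<close> fraction of the gap to OPT, so after \<open>K\<close> steps the gap is at most
\<open>(1 - 1/K)\<^sup>K \<cdot> OPT \<le> OPT/e\<close>. Finally, \<open>K\<close> alternatives with capacity \<open>\<lceil>n/K\<rceil>\<close> can absorb all
\<open>n\<close> agents, so the greedy output extends to a Monroe assignment.\<close>

definition load :: "'v set \<Rightarrow> ('v \<Rightarrow> 'a option) \<Rightarrow> 'a \<Rightarrow> nat" where
  "load D f a = card {i\<in>D. f i = Some a}"

lemma load_insert:
  assumes "finite P" "e \<notin> P"
  shows "load (insert e P) f x = load P f x + (if f e = Some x then 1 else 0)"
proof -
  have "{i\<in>insert e P. f i = Some x} = (if f e = Some x then insert e else id) {i\<in>P. f i = Some x}"
    by auto
  then show ?thesis using assms by (simp add: load_def)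
qed

lemma load_remove:
  assumes "finite D" "e \<in> D"
  shows "load D f x = load (D - {e}) f x + (if f e = Some x then 1 else 0)"
  using load_insert[of "D - {e}" e f x] assms by (simp add: insert_absorb)

lemma load_cong: "(\<And>i. i \<in> D \<Longrightarrow> f i = g i) \<Longrightarrow> load D f x = load D g x"
  unfolding load_def by (rule arg_cong[where f = card]) auto

lemma load_fun_upd:
  assumes "finite D" "e \<in> D"
  shows "load D (f(e := y)) x + (if f e = Some x then 1 else 0) =
    load D f x + (if y = Some x then 1 else 0)"
  using load_remove[OF assms, of "f(e := y)" x] load_remove[OF assms, of f x]
    load_cong[of "D - {e}" "f(e := y)" f x] by simp

lemma load_mono: "finite D \<Longrightarrow> P \<subseteq> D \<Longrightarrow> load P f x \<le> load D f x"
  unfolding load_def by (rule card_mono) auto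

lemma load_Diff_add:
  assumes "finite D" "P \<subseteq> D"
  shows "load (D - P) f x + load P f x = load D f x"
proof -
  have "{i\<in>D. f i = Some x} = {i\<in>D - P. f i = Some x} \<union> {i\<in>P. f i = Some x}" using assms(2) by auto
  moreover have "finite {i\<in>P. f i = Some x}" using finite_subset[OF assms(2,1)] by simp
  ultimately show ?thesis unfolding load_def using assms(1)
    by (simp add: card_Un_disjoint[symmetric] disjoint_iff)
qed

lemma load_override_on:
  assumes "finite D" "P \<subseteq> D"
  shows "load D (override_on f g P) x = load P g x + load (D - P) f x"
  using load_Diff_add[OF assms, of "override_on f g P" x]
    load_cong[of P "override_on f g P" g x] load_cong[of "D - P" "override_on f g P" f x] by simp

lemma load_pos: "finite P \<Longrightarrow> i \<in> P \<Longrightarrow> f i = Some a \<Longrightarrow> 0 < load P f a"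
  unfolding load_def by (subst card_gt_0_iff) auto

lemma partial_assignment_iff_load:
  "partial_assignment N S K \<Phi> \<longleftrightarrow> (\<forall>i\<in>N. \<Phi> i = None \<or> (\<exists>a\<in>S. \<Phi> i = Some a)) \<and>
     (\<forall>a\<in>S. load N \<Phi> a \<le> capacity (card N) K)"
  by (simp add: partial_assignment_def load_def)

lemma load_eq_0_outside:
  assumes "\<forall>i\<in>N. \<Phi> i = None \<or> (\<exists>a\<in>S. \<Phi> i = Some a)" "x \<notin> S"
  shows "load N \<Phi> x = 0"
proof -
  from assms have "{i\<in>N. \<Phi> i = Some x} = {}" by force
  then show ?thesis unfolding load_def by (simp only: card.empty)
qed

text \<open>Swapping \<open>\<phi>\<close> and \<open>\<psi>\<close> on \<open>P\<close> moves every \<open>\<psi>\<close>-agent of \<open>b\<close> over to the \<open>\<phi>\<close> side; the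
two load bounds are exactly what keeps both swapped assignments within capacity.\<close>

definition exchange_set ::
    "'v set \<Rightarrow> ('v \<Rightarrow> 'a option) \<Rightarrow> ('v \<Rightarrow> 'a option) \<Rightarrow> 'a \<Rightarrow> 'v set \<Rightarrow> bool" where
  "exchange_set D \<phi> \<psi> b P \<longleftrightarrow> P \<subseteq> D \<and> (\<forall>i\<in>D. \<psi> i = Some b \<longrightarrow> i \<in> P) \<and>
     (\<forall>x. x \<noteq> b \<longrightarrow> load P \<psi> x \<le> load P \<phi> x \<and>
        load P \<phi> x \<le> load P \<psi> x + (load D \<phi> x - load D \<psi> x))"

lemma exchange_set_empty: "\<forall>i\<in>D. \<psi> i \<noteq> Some b \<Longrightarrow> exchange_set D \<phi> \<psi> b {}"
  by (auto simp: exchange_set_def load_def)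

lemma exchange_set_insert_matched:
  fixes \<phi> \<psi> :: "'v \<Rightarrow> 'a option"
  assumes "finite D" "e \<in> D" "\<psi> e = Some b" "\<phi> e = Some a" "f \<in> D" "\<psi> f = Some a" "a \<noteq> b"
    and P': "exchange_set (D - {e}) \<phi> (\<psi>(f := Some b)) b P'"
  shows "exchange_set D \<phi> \<psi> b (insert e P')"
proof -
  define \<psi>' where "\<psi>' = \<psi>(f := Some b)"
  have "P' \<subseteq> D - {e}" using P' by (simp add: exchange_set_def)
  have f: "f \<in> D - {e}" using assms(3,5-7) by auto
  with P' have "f \<in> P'" by (simp add: exchange_set_def)
  have "finite P'" using finite_subset[OF \<open>P' \<subseteq> D - {e}\<close>] assms(1) by blast
  have "e \<notin> P'" using \<open>P' \<subseteq> D - {e}\<close> by blast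
  have ins: "load (insert e P') g x = load P' g x + (if g e = Some x then 1 else 0)"
    for g :: "'v \<Rightarrow> 'a option" and x
    by (rule load_insert[OF \<open>finite P'\<close> \<open>e \<notin> P'\<close>])
  have rem: "load D g x = load (D - {e}) g x + (if g e = Some x then 1 else 0)"
    for g :: "'v \<Rightarrow> 'a option" and x
    by (rule load_remove[OF assms(1,2)])
  have shift: "load Q \<psi> x = load Q \<psi>' x + (if a = x then 1 else 0)"
    if "Q \<subseteq> D - {e}" "f \<in> Q" "x \<noteq> b" for Q x
  proof -
    have "finite Q" using finite_subset[OF that(1)] assms(1) by blast
    from load_fun_upd[OF this that(2), of \<psi> "Some b" x] show ?thesis
      using assms(6) that(3) by (simp add: \<psi>'_def)
  qed
  have bounds: "load (insert e P') \<psi> x \<le> load (insert e P') \<phi> x \<and>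
      load (insert e P') \<phi> x \<le> load (insert e P') \<psi> x + (load D \<phi> x - load D \<psi> x)"
    if "x \<noteq> b" for x
  proof -
    have "load (insert e P') \<psi> x = load P' \<psi>' x + (if a = x then 1 else 0)"
      "load D \<psi> x = load (D - {e}) \<psi>' x + (if a = x then 1 else 0)"
      "load (insert e P') \<phi> x = load P' \<phi> x + (if a = x then 1 else 0)"
      "load D \<phi> x = load (D - {e}) \<phi> x + (if a = x then 1 else 0)"
      using shift[OF \<open>P' \<subseteq> D - {e}\<close> \<open>f \<in> P'\<close> that] shift[OF order_refl f that]
        assms(3,4) that
      by (simp_all add: ins rem)
    then show ?thesis using P' that by (simp add: exchange_set_def \<psi>'_def)
  qed
  have sub: "insert e P' \<subseteq> D" using \<open>P' \<subseteq> D - {e}\<close> assms(2) by blast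
  have mem: "i \<in> insert e P'" if "i \<in> D" "\<psi> i = Some b" for i
    using P' that assms(6,7) by (cases "i = e") (auto simp: exchange_set_def \<psi>'_def)
  show ?thesis unfolding exchange_set_def
    by (intro conjI ballI allI impI) (use bounds sub mem in blast)+
qed

lemma exchange_set_insert_unmatched:
  fixes \<phi> \<psi> :: "'v \<Rightarrow> 'a option"
  assumes "finite D" "e \<in> D" "\<psi> e = Some b"
    and unmatched: "\<phi> e = None \<or> (\<forall>f\<in>D. \<psi> f \<noteq> \<phi> e)"
    and P': "exchange_set (D - {e}) \<phi> \<psi> b P'"
  shows "exchange_set D \<phi> \<psi> b (insert e P')"
proof -
  have "P' \<subseteq> D - {e}" using P' by (simp add: exchange_set_def)
  have "finite P'" using finite_subset[OF \<open>P' \<subseteq> D - {e}\<close>] assms(1) by blast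
  have "e \<notin> P'" using \<open>P' \<subseteq> D - {e}\<close> by blast
  have ins: "load (insert e P') g x = load P' g x + (if g e = Some x then 1 else 0)"
    for g :: "'v \<Rightarrow> 'a option" and x
    by (rule load_insert[OF \<open>finite P'\<close> \<open>e \<notin> P'\<close>])
  have rem: "load D g x = load (D - {e}) g x + (if g e = Some x then 1 else 0)"
    for g :: "'v \<Rightarrow> 'a option" and x
    by (rule load_remove[OF assms(1,2)])
  have bounds: "load (insert e P') \<psi> x \<le> load (insert e P') \<phi> x \<and>
      load (insert e P') \<phi> x \<le> load (insert e P') \<psi> x + (load D \<phi> x - load D \<psi> x)"
    if "x \<noteq> b" for x
  proof (cases "\<phi> e = Some x")
    case True
    \<comment> \<open>no agent demands \<open>x\<close> under \<open>\<psi>\<close>, so only the trivial bounds are needed\<close>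
    then have "{i\<in>D. \<psi> i = Some x} = {}" using unmatched by auto
    then have "load D \<psi> x = 0" unfolding load_def by (simp only: card.empty)
    moreover have "insert e P' \<subseteq> D" using \<open>P' \<subseteq> D - {e}\<close> assms(2) by blast
    then have "load (insert e P') \<psi> x \<le> load D \<psi> x" "load (insert e P') \<phi> x \<le> load D \<phi> x"
      by (rule load_mono[OF assms(1)])+
    ultimately show ?thesis by simp
  next
    case False
    have "load (insert e P') \<psi> x = load P' \<psi> x" "load D \<psi> x = load (D - {e}) \<psi> x"
      "load (insert e P') \<phi> x = load P' \<phi> x" "load D \<phi> x = load (D - {e}) \<phi> x"
      using False assms(3) that by (simp_all add: ins rem)
    then show ?thesis using P' that by (simp add: exchange_set_def)
  qed
  have sub: "insert e P' \<subseteq> D" using \<open>P' \<subseteq> D - {e}\<close> assms(2) by blast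
  have mem: "i \<in> insert e P'" if "i \<in> D" "\<psi> i = Some b" for i
    using P' that by (auto simp: exchange_set_def)
  show ?thesis unfolding exchange_set_def
    by (intro conjI ballI allI impI) (use bounds sub mem in blast)+
qed

lemma exchange_set_exists:
  fixes \<phi> \<psi> :: "'v \<Rightarrow> 'a option"
  assumes "finite D" and "\<forall>i\<in>D. \<phi> i \<noteq> Some b"
  shows "\<exists>P. exchange_set D \<phi> \<psi> b P"
  using assms
proof (induction "card D" arbitrary: D \<psi> rule: less_induct)
  case less
  show ?case
  proof (cases "\<exists>e\<in>D. \<psi> e = Some b")
    case False
    then have "\<forall>i\<in>D. \<psi> i \<noteq> Some b" by blast
    then have "exchange_set D \<phi> \<psi> b {}" by (rule exchange_set_empty)
    then show ?thesis by blast
  next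
    case True
    then obtain e where e: "e \<in> D" "\<psi> e = Some b" by blast
    have "card (D - {e}) < card D" "finite (D - {e})" "\<forall>i\<in>D - {e}. \<phi> i \<noteq> Some b"
      using card_Diff1_less[OF less.prems(1) e(1)] less.prems by auto
    then have IH: "\<exists>P'. exchange_set (D - {e}) \<phi> \<psi>' b P'" for \<psi>'
      by (rule less.hyps)
    show ?thesis
    proof (cases "\<exists>f\<in>D. \<phi> e \<noteq> None \<and> \<psi> f = \<phi> e")
      case True
      \<comment> \<open>the demand of \<open>f\<close> for \<open>\<phi> e\<close> is redirected to \<open>b\<close>, and \<open>e\<close> takes it over\<close>
      then obtain f a where "f \<in> D" "\<phi> e = Some a" "\<psi> f = Some a" by fastforce
      moreover have "a \<noteq> b" using less.prems(2) e(1) \<open>\<phi> e = Some a\<close> by auto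
      moreover obtain P' where "exchange_set (D - {e}) \<phi> (\<psi>(f := Some b)) b P'"
        using IH by blast
      ultimately show ?thesis
        using exchange_set_insert_matched[where \<phi> = \<phi> and \<psi> = \<psi>, OF less.prems(1) e] by blast
    next
      case False
      then have "\<phi> e = None \<or> (\<forall>f\<in>D. \<psi> f \<noteq> \<phi> e)" by blast
      moreover obtain P' where "exchange_set (D - {e}) \<phi> \<psi> b P'" using IH by blast
      ultimately show ?thesis
        using exchange_set_insert_unmatched[where \<phi> = \<phi> and \<psi> = \<psi>, OF less.prems(1) e] by blast
    qed
  qed
qed

lemma partial_assignment_load_le:
  assumes "partial_assignment N S K \<Phi>"
  shows "load N \<Phi> a \<le> capacity (card N) K"
  using assms load_eq_0_outside[of N \<Phi> S a] unfolding partial_assignment_iff_load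
  by (cases "a \<in> S") auto

lemma partial_assignment_mono:
  assumes "partial_assignment N S K \<Phi>" "S \<subseteq> S'"
  shows "partial_assignment N S' K \<Phi>"
  using assms partial_assignment_load_le[OF assms(1)] unfolding partial_assignment_iff_load by blast

lemma partial_assignment_override_gain:
  assumes "finite N" and \<Phi>: "partial_assignment N S K \<Phi>" and \<Psi>: "partial_assignment N T K \<Psi>"
    and "b \<in> T" "b \<notin> S" and P: "exchange_set N \<Phi> \<Psi> b P"
  shows "partial_assignment N (insert b S) K (override_on \<Phi> \<Psi> P)"
proof -
  have "P \<subseteq> N" and P_le: "\<And>x. x \<noteq> b \<Longrightarrow> load P \<Psi> x \<le> load P \<Phi> x"
    using P by (auto simp: exchange_set_def)
  show ?thesis
    unfolding partial_assignment_iff_load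
  proof (intro conjI ballI)
    have \<Phi>_valid: "\<forall>i\<in>N. \<Phi> i = None \<or> (\<exists>a\<in>S. \<Phi> i = Some a)"
      using \<Phi> by (simp add: partial_assignment_iff_load)
    fix i assume "i \<in> N"
    show "override_on \<Phi> \<Psi> P i = None \<or> (\<exists>a\<in>insert b S. override_on \<Phi> \<Psi> P i = Some a)"
    proof (cases "i \<in> P \<and> \<Psi> i \<noteq> None")
      case True
      then obtain a where a: "i \<in> P" "\<Psi> i = Some a" by blast
      have "a \<in> insert b S"
      proof (rule ccontr)
        assume "a \<notin> insert b S"
        \<comment> \<open>\<open>\<Phi>\<close> gives no agent of \<open>P\<close> to \<open>a\<close>, hence neither does \<open>\<Psi>\<close>\<close>
        then have "load P \<Psi> a \<le> load N \<Phi> a" "load N \<Phi> a = 0"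
          using P_le[of a] load_mono[OF assms(1) \<open>P \<subseteq> N\<close>, of \<Phi> a] load_eq_0_outside[OF \<Phi>_valid]
          by auto
        moreover have "0 < load P \<Psi> a"
          using load_pos[where f = \<Psi>, OF finite_subset[OF \<open>P \<subseteq> N\<close> assms(1)] a] .
        ultimately show False by simp
      qed
      then show ?thesis using a by auto
    qed (use \<Phi>_valid \<open>i \<in> N\<close> in \<open>auto simp: override_on_def\<close>)
  next
    fix a assume "a \<in> insert b S"
    have split: "load N (override_on \<Phi> \<Psi> P) x = load P \<Psi> x + load (N - P) \<Phi> x" for x
      by (rule load_override_on[OF assms(1) \<open>P \<subseteq> N\<close>])
    have parts: "load (N - P) \<Phi> x + load P \<Phi> x = load N \<Phi> x" for x
      by (rule load_Diff_add[OF assms(1) \<open>P \<subseteq> N\<close>])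
    show "load N (override_on \<Phi> \<Psi> P) a \<le> capacity (card N) K"
    proof (cases "a = b")
      case True
      have "load N \<Phi> b = 0"
        using \<Phi> \<open>b \<notin> S\<close> load_eq_0_outside by (auto simp: partial_assignment_iff_load)
      moreover have "load P \<Psi> b \<le> load N \<Psi> b" by (rule load_mono[OF assms(1) \<open>P \<subseteq> N\<close>])
      ultimately show ?thesis
        using split[of b] parts[of b] partial_assignment_load_le[OF \<Psi>, of b] unfolding True by linarith
    next
      case False
      then show ?thesis
        using split[of a] parts[of a] P_le[OF False] partial_assignment_load_le[OF \<Phi>, of a] by linarith
    qed
  qed
qed

lemma partial_assignment_override_rest:
  assumes "finite N" and \<Phi>: "partial_assignment N S K \<Phi>" and \<Psi>: "partial_assignment N T K \<Psi>"
    and "b \<notin> S" and P: "exchange_set N \<Phi> \<Psi> b P"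
  shows "partial_assignment N (S \<union> (T - {b})) K (override_on \<Psi> \<Phi> P)"
  unfolding partial_assignment_iff_load
proof (intro conjI ballI)
  fix i assume "i \<in> N"
  moreover have "i \<in> P" if "\<Psi> i = Some b" using P that \<open>i \<in> N\<close> by (auto simp: exchange_set_def)
  ultimately show
    "override_on \<Psi> \<Phi> P i = None \<or> (\<exists>a\<in>S \<union> (T - {b}). override_on \<Psi> \<Phi> P i = Some a)"
    using \<Phi> \<Psi> by (cases "i \<in> P") (auto simp: partial_assignment_iff_load)
next
  have "P \<subseteq> N" using P by (simp add: exchange_set_def)
  fix a assume "a \<in> S \<union> (T - {b})"
  then have "a \<noteq> b" using \<open>b \<notin> S\<close> by blast
  have "load N (override_on \<Psi> \<Phi> P) a = load P \<Phi> a + load (N - P) \<Psi> a"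
    by (rule load_override_on[OF assms(1) \<open>P \<subseteq> N\<close>])
  moreover have "load (N - P) \<Psi> a + load P \<Psi> a = load N \<Psi> a"
    by (rule load_Diff_add[OF assms(1) \<open>P \<subseteq> N\<close>])
  moreover have "load P \<Phi> a \<le> load P \<Psi> a + (load N \<Phi> a - load N \<Psi> a)"
    using P \<open>a \<noteq> b\<close> by (simp add: exchange_set_def)
  \<comment> \<open>the new load of \<open>a\<close> is at most the larger of its loads under \<open>\<Phi>\<close> and \<open>\<Psi>\<close>\<close>
  ultimately show "load N (override_on \<Psi> \<Phi> P) a \<le> capacity (card N) K"
    using partial_assignment_load_le[OF \<Phi>, of a] partial_assignment_load_le[OF \<Psi>, of a]
    by linarith
qed

lemma partial_assignment_exchange:
  assumes "finite N" "partial_assignment N S K \<Phi>" "partial_assignment N T K \<Psi>" "b \<in> T" "b \<notin> S"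
  shows "\<exists>P. partial_assignment N (insert b S) K (override_on \<Phi> \<Psi> P) \<and>
    partial_assignment N (S \<union> (T - {b})) K (override_on \<Psi> \<Phi> P)"
proof -
  have "\<forall>i\<in>N. \<Phi> i = None \<or> (\<exists>a\<in>S. \<Phi> i = Some a)"
    using assms(2) by (simp add: partial_assignment_iff_load)
  then have "\<forall>i\<in>N. \<Phi> i \<noteq> Some b" using assms(5) by fastforce
  from exchange_set_exists[OF assms(1) this, of \<Psi>]
  obtain P where P: "exchange_set N \<Phi> \<Psi> b P" ..
  show ?thesis
    using partial_assignment_override_gain[OF assms P]
      partial_assignment_override_rest[OF assms(1-3,5) P] by blast
qed

lemma ell1_override_on_swap:
  "ell1 N \<alpha> m pos (override_on \<Phi> \<Psi> P) + ell1 N \<alpha> m pos (override_on \<Psi> \<Phi> P) =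
     ell1 N \<alpha> m pos \<Phi> + ell1 N \<alpha> m pos \<Psi>"
  unfolding ell1_def sum.distrib[symmetric] by (intro sum.cong) (auto simp: override_on_def)

lemma optimal_partial_union_le:
  assumes "finite N" and opt: "optimal_partial N A pos \<alpha> K S \<Phi>" and "finite B"
    and bound: "\<forall>b\<in>B. \<forall>\<Psi>. partial_assignment N (insert b S) K \<Psi> \<longrightarrow>
      ell1 N \<alpha> (card A) pos \<Psi> \<le> g"
  shows "partial_assignment N (S \<union> B) K \<Psi> \<Longrightarrow>
    ell1 N \<alpha> (card A) pos \<Psi> + card B * ell1 N \<alpha> (card A) pos \<Phi>
      \<le> ell1 N \<alpha> (card A) pos \<Phi> + card B * g"
  using \<open>finite B\<close> bound
proof (induction B arbitrary: \<Psi> rule: finite_induct)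
  case empty
  then show ?case using opt by (simp add: optimal_partial_def)
next
  case (insert b B)
  let ?e = "ell1 N \<alpha> (card A) pos"
  have \<Phi>: "partial_assignment N S K \<Phi>" using opt by (simp add: optimal_partial_def)
  have IH: "?e \<Psi>' + card B * ?e \<Phi> \<le> ?e \<Phi> + card B * g"
    if "partial_assignment N (S \<union> B) K \<Psi>'" for \<Psi>'
    using insert.IH[OF that] insert.prems(2) by blast
  have b: "?e \<Psi>' \<le> g" if "partial_assignment N (insert b S) K \<Psi>'" for \<Psi>'
    using insert.prems(2) that by blast
  have card: "card (insert b B) = Suc (card B)" using insert.hyps by simp
  show ?case
  proof (cases "b \<in> S")
    case True
    then have "S \<union> insert b B = S \<union> B" "insert b S = S" by auto
    then have "?e \<Psi> + card B * ?e \<Phi> \<le> ?e \<Phi> + card B * g" "?e \<Phi> \<le> g"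
      using IH b insert.prems(1) \<Phi> by auto
    then show ?thesis unfolding card mult_Suc by linarith
  next
    case False
    \<comment> \<open>trade the agents of \<open>b\<close> into \<open>\<Phi>\<close>; the remainder of \<open>\<Psi>\<close> lives on \<open>S \<union> B\<close>\<close>
    obtain P where P: "partial_assignment N (insert b S) K (override_on \<Phi> \<Psi> P)"
        "partial_assignment N (S \<union> (S \<union> insert b B - {b})) K (override_on \<Psi> \<Phi> P)"
      using partial_assignment_exchange[OF assms(1) \<Phi> insert.prems(1) _ False] by blast
    have "S \<union> (S \<union> insert b B - {b}) = S \<union> B" using False insert.hyps by auto
    then have "?e (override_on \<Psi> \<Phi> P) + card B * ?e \<Phi> \<le> ?e \<Phi> + card B * g"
      using IH P(2) by simp
    moreover have "?e (override_on \<Phi> \<Psi> P) \<le> g" using b P(1) .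
    ultimately show ?thesis
      using ell1_override_on_swap[of N \<alpha> "card A" pos \<Phi> \<Psi> P] unfolding card mult_Suc
      by linarith
  qed
qed

lemma card_le_mult_capacity:
  assumes "0 < K"
  shows "n \<le> K * capacity n K"
proof -
  have "real n / real K \<le> of_int \<lceil>real n / real K\<rceil>" by (rule le_of_int_ceiling)
  also have "\<dots> = real (capacity n K)" by (simp add: capacity_def)
  finally have "real n \<le> real K * real (capacity n K)"
    using assms by (simp add: divide_le_eq mult.commute)
  then show ?thesis by (simp only: of_nat_mult[symmetric] of_nat_le_iff)
qed

lemma partial_assignment_free_slot:
  assumes "finite N" "finite S" "card N \<le> card S * capacity (card N) K"
    and \<Phi>: "partial_assignment N S K \<Phi>" and "i \<in> N" "\<Phi> i = None"
  shows "\<exists>a\<in>S. load N \<Phi> a < capacity (card N) K"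
proof (rule ccontr)
  assume "\<not> (\<exists>a\<in>S. load N \<Phi> a < capacity (card N) K)"
  then have full: "(\<Sum>a\<in>S. capacity (card N) K) \<le> (\<Sum>a\<in>S. load N \<Phi> a)"
    by (intro sum_mono) (simp add: not_less)
  have "{j\<in>N. \<Phi> j \<noteq> None} = (\<Union>a\<in>S. {j\<in>N. \<Phi> j = Some a})"
    using \<Phi> by (auto simp: partial_assignment_def)
  then have "card {j\<in>N. \<Phi> j \<noteq> None} = (\<Sum>a\<in>S. load N \<Phi> a)"
    unfolding load_def using assms(1,2) by (simp only:) (rule card_UN_disjoint, auto)
  moreover have "{j\<in>N. \<Phi> j \<noteq> None} \<subset> N" using assms(5,6) by blast
  then have "card {j\<in>N. \<Phi> j \<noteq> None} < card N" by (rule psubset_card_mono[OF assms(1)])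
  ultimately show False using full assms(3) by (simp add: mult.commute)
qed

lemma partial_assignment_fun_upd:
  assumes "finite N" and \<Phi>: "partial_assignment N S K \<Phi>" and "i \<in> N" "\<Phi> i = None"
    and "a \<in> S" "load N \<Phi> a < capacity (card N) K"
  shows "partial_assignment N S K (\<Phi>(i := Some a))"
  unfolding partial_assignment_iff_load
proof (intro conjI ballI)
  fix j assume "j \<in> N"
  then show "(\<Phi>(i := Some a)) j = None \<or> (\<exists>x\<in>S. (\<Phi>(i := Some a)) j = Some x)"
    using \<Phi> \<open>a \<in> S\<close> by (auto simp: partial_assignment_iff_load)
next
  fix x assume "x \<in> S"
  have "load N (\<Phi>(i := Some a)) x = load N \<Phi> x + (if a = x then 1 else 0)"
    using load_fun_upd[OF assms(1,3), of \<Phi> "Some a" x] assms(4) by simp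
  then show "load N (\<Phi>(i := Some a)) x \<le> capacity (card N) K"
    using assms(6) partial_assignment_load_le[OF \<Phi>, of x] by (cases "a = x") auto
qed

lemma partial_assignment_extends_to_total:
  assumes "finite N" "finite S" "card N \<le> card S * capacity (card N) K"
  shows "partial_assignment N S K \<Phi> \<Longrightarrow>
    \<exists>\<Phi>'. partial_assignment N S K \<Phi>' \<and> (\<forall>i\<in>N. \<Phi>' i \<noteq> None) \<and>
      (\<forall>i\<in>N. \<Phi> i \<noteq> None \<longrightarrow> \<Phi>' i = \<Phi> i)"
proof (induction "card {i\<in>N. \<Phi> i = None}" arbitrary: \<Phi> rule: less_induct)
  case less
  show ?case
  proof (cases "\<exists>i\<in>N. \<Phi> i = None")
    case False
    then show ?thesis using less.prems by (intro exI[of _ \<Phi>]) simp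
  next
    case True
    then obtain i where i: "i \<in> N" "\<Phi> i = None" by blast
    obtain a where "a \<in> S" "load N \<Phi> a < capacity (card N) K"
      using partial_assignment_free_slot[OF assms less.prems i] by blast
    then have upd: "partial_assignment N S K (\<Phi>(i := Some a))"
      using partial_assignment_fun_upd[OF assms(1) less.prems i] by blast
    have "{j\<in>N. (\<Phi>(i := Some a)) j = None} = {j\<in>N. \<Phi> j = None} - {i}" by auto
    moreover have "card ({j\<in>N. \<Phi> j = None} - {i}) < card {j\<in>N. \<Phi> j = None}"
      using assms(1) i by (intro card_Diff1_less) auto
    ultimately have "card {j\<in>N. (\<Phi>(i := Some a)) j = None} < card {j\<in>N. \<Phi> j = None}"
      by simp
    then obtain \<Phi>' where "partial_assignment N S K \<Phi>'" "\<forall>j\<in>N. \<Phi>' j \<noteq> None"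
        "\<forall>j\<in>N. (\<Phi>(i := Some a)) j \<noteq> None \<longrightarrow> \<Phi>' j = (\<Phi>(i := Some a)) j"
      using less.hyps upd by blast
    then show ?thesis using i by (metis fun_upd_other)
  qed
qed

lemma total_partial_assignment_monroe:
  assumes "partial_assignment N S K \<Phi>" "\<forall>i\<in>N. \<Phi> i \<noteq> None" "finite S" "S \<subseteq> A" "card S \<le> K"
  shows "monroe_assignment N A K (\<lambda>i. the (\<Phi> i))"
  unfolding monroe_assignment_def
proof (intro conjI ballI)
  have in_S: "the (\<Phi> i) \<in> S" if "i \<in> N" for i
    using assms(1,2) that by (fastforce simp: partial_assignment_def)
  then show "the (\<Phi> i) \<in> A" if "i \<in> N" for i using that assms(4) by blast
  have "card ((\<lambda>i. the (\<Phi> i)) ` N) \<le> card S" using in_S assms(3) by (intro card_mono) auto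
  then show "card ((\<lambda>i. the (\<Phi> i)) ` N) \<le> K" using assms(5) by linarith
  fix a
  have "{i\<in>N. the (\<Phi> i) = a} = {i\<in>N. \<Phi> i = Some a}" using assms(2) by force
  then show "card {i\<in>N. the (\<Phi> i) = a} \<le> capacity (card N) K"
    using partial_assignment_load_le[OF assms(1), of a] by (simp add: load_def)
qed

lemma optimal_partial_empty: "optimal_partial N A pos \<alpha> K {} (\<lambda>_. None)"
  by (auto simp: optimal_partial_def partial_assignment_def ell1_def intro!: sum_mono)

lemma optimal_partial_ell1_eq:
  "optimal_partial N A pos \<alpha> K S \<Phi> \<Longrightarrow> optimal_partial N A pos \<alpha> K S \<Phi>' \<Longrightarrow>
    ell1 N \<alpha> (card A) pos \<Phi> = ell1 N \<alpha> (card A) pos \<Phi>'"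
  unfolding optimal_partial_def by (simp add: antisym)

lemma monroe_assignment_partial:
  assumes "monroe_assignment N A K \<Psi>" "\<Psi> ` N \<subseteq> S"
  shows "partial_assignment N S K (\<lambda>i. Some (\<Psi> i))"
  unfolding partial_assignment_def
proof (intro conjI ballI)
  fix a
  show "card {i\<in>N. Some (\<Psi> i) = Some a} \<le> capacity (card N) K"
  proof (cases "a \<in> A")
    case True
    then show ?thesis using assms(1) by (simp add: monroe_assignment_def)
  next
    case False
    then have "{i\<in>N. Some (\<Psi> i) = Some a} = {}"
      using assms(1) by (auto simp: monroe_assignment_def)
    then show ?thesis by (simp only: card.empty)
  qed
qed (use assms(2) in auto)

lemma greedy_choice_gain:
  assumes "finite N" and opt: "optimal_partial N A pos \<alpha> K S \<Phi>"
    and greedy: "greedy_choice N A pos \<alpha> K S a"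
    and opt': "optimal_partial N A pos \<alpha> K (insert a S) \<Phi>'"
    and \<Psi>: "monroe_assignment N A K \<Psi>"
  shows "real (ell1 N \<alpha> (card A) pos (\<lambda>i. Some (\<Psi> i))) - real (ell1 N \<alpha> (card A) pos \<Phi>)
    \<le> real K * (real (ell1 N \<alpha> (card A) pos \<Phi>') - real (ell1 N \<alpha> (card A) pos \<Phi>))"
proof -
  let ?e = "ell1 N \<alpha> (card A) pos"
  define B where "B = \<Psi> ` N"
  have "finite B" "card B \<le> K" "B \<subseteq> A"
    using \<Psi> assms(1) by (auto simp: B_def monroe_assignment_def)
  have "partial_assignment N (insert a S) K \<Phi>"
    using opt unfolding optimal_partial_def by (blast intro: partial_assignment_mono[OF _ subset_insertI])
  then have "?e \<Phi> \<le> ?e \<Phi>'" using opt' by (simp add: optimal_partial_def)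
  obtain \<Phi>'' where "optimal_partial N A pos \<alpha> K (S \<union> {a}) \<Phi>''" and
    best: "\<forall>b\<in>A - S. \<forall>\<Psi>'. partial_assignment N (S \<union> {b}) K \<Psi>' \<longrightarrow> ?e \<Psi>' \<le> ?e \<Phi>''"
    using greedy by (auto simp: greedy_choice_def)
  then have "?e \<Phi>'' = ?e \<Phi>'" using optimal_partial_ell1_eq[OF _ opt'] by simp
  have "\<forall>b\<in>B. \<forall>\<Psi>'. partial_assignment N (insert b S) K \<Psi>' \<longrightarrow> ?e \<Psi>' \<le> ?e \<Phi>'"
  proof (intro ballI allI impI)
    fix b \<Psi>' assume "b \<in> B" and \<Psi>': "partial_assignment N (insert b S) K \<Psi>'"
    show "?e \<Psi>' \<le> ?e \<Phi>'"
    proof (cases "b \<in> S")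
      case True
      then have "partial_assignment N S K \<Psi>'" using \<Psi>' by (simp add: insert_absorb)
      then have "?e \<Psi>' \<le> ?e \<Phi>" using opt by (simp add: optimal_partial_def)
      then show ?thesis using \<open>?e \<Phi> \<le> ?e \<Phi>'\<close> by linarith
    next
      case False
      then have "b \<in> A - S" using \<open>b \<in> B\<close> \<open>B \<subseteq> A\<close> by blast
      then show ?thesis using best \<Psi>' \<open>?e \<Phi>'' = ?e \<Phi>'\<close> by simp
    qed
  qed
  moreover have "partial_assignment N (S \<union> B) K (\<lambda>i. Some (\<Psi> i))"
    using monroe_assignment_partial[OF \<Psi>] by (simp add: B_def)
  ultimately have "?e (\<lambda>i. Some (\<Psi> i)) + card B * ?e \<Phi> \<le> ?e \<Phi> + card B * ?e \<Phi>'"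
    using optimal_partial_union_le[OF assms(1) opt \<open>finite B\<close>] by blast
  then have "real (?e (\<lambda>i. Some (\<Psi> i))) - real (?e \<Phi>)
      \<le> real (card B) * (real (?e \<Phi>') - real (?e \<Phi>))"
    by (simp add: algebra_simps flip: of_nat_mult of_nat_add)
  also have "\<dots> \<le> real K * (real (?e \<Phi>') - real (?e \<Phi>))"
    using \<open>card B \<le> K\<close> \<open>?e \<Phi> \<le> ?e \<Phi>'\<close> by (intro mult_right_mono) auto
  finally show ?thesis .
qed

lemma gap_shrinking_bound:
  fixes v :: "nat \<Rightarrow> real"
  assumes "0 < K" "0 \<le> v 0" "0 \<le> opt"
    and gain: "\<And>j. j < K \<Longrightarrow> opt - v j \<le> real K * (v (Suc j) - v j)"
  shows "(1 - 1 / exp 1) * opt \<le> v K"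
proof -
  define q where "q = 1 - 1 / real K"
  have "0 \<le> q" using assms(1) by (simp add: q_def)
  have gap: "opt - v j \<le> q ^ j * (opt - v 0)" if "j \<le> K" for j
    using that
  proof (induction j)
    case (Suc j)
    have "(opt - v j) / real K \<le> v (Suc j) - v j"
      using gain[of j] Suc.prems assms(1) by (simp add: pos_divide_le_eq mult.commute)
    then have "opt - v (Suc j) \<le> q * (opt - v j)" by (simp add: q_def algebra_simps)
    also have "\<dots> \<le> q * (q ^ j * (opt - v 0))"
      using Suc \<open>0 \<le> q\<close> by (intro mult_left_mono) auto
    finally show ?case by simp
  qed simp
  have "q ^ K \<le> exp (-1)"
    using exp_ge_one_minus_x_over_n_power_n[of 1 K] assms(1) by (simp add: q_def)
  have "opt - v K \<le> q ^ K * (opt - v 0)" using gap[of K] by simp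
  also have "\<dots> \<le> q ^ K * opt" using assms(2) \<open>0 \<le> q\<close> by (intro mult_left_mono) auto
  also have "\<dots> \<le> exp (-1) * opt" using \<open>q ^ K \<le> exp (-1)\<close> assms(3) by (rule mult_right_mono)
  also have "\<dots> = opt / exp 1" by (simp add: exp_minus divide_inverse)
  finally show ?thesis by (simp add: left_diff_distrib)
qed

lemma gm_run_distinct_subset:
  assumes "gm_run N A pos \<alpha> K xs \<Phi>"
  shows "distinct xs" and "set xs \<subseteq> A"
proof -
  have len: "length xs = K" and fresh: "\<And>j. j < K \<Longrightarrow> xs ! j \<in> A - set (take j xs)"
    using assms by (auto simp: gm_run_def greedy_choice_def)
  have "distinct (take j xs)" if "j \<le> K" for j
    using that
  proof (induction j)
    case (Suc j)
    then show ?case using fresh[of j] len by (simp add: take_Suc_conv_app_nth)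
  qed simp
  then show "distinct xs" using len by (metis order_refl take_all)
  show "set xs \<subseteq> A" using fresh len by (auto simp: in_set_conv_nth)
qed

lemma gm_run_optimal_prefixes:
  assumes "gm_run N A pos \<alpha> K xs \<Phi>"
  obtains Ph where "\<And>j. j \<le> K \<Longrightarrow> optimal_partial N A pos \<alpha> K (set (take j xs)) (Ph j)"
proof -
  have "\<exists>F. j \<le> K \<longrightarrow> optimal_partial N A pos \<alpha> K (set (take j xs)) F" for j
  proof (cases j)
    case 0
    then show ?thesis using optimal_partial_empty by (intro exI[of _ "\<lambda>_. None"]) simp
  next
    case (Suc j')
    show ?thesis
    proof (cases "j \<le> K")
      case True
      then have "j' < length xs" "greedy_choice N A pos \<alpha> K (set (take j' xs)) (xs ! j')"
        using assms Suc by (auto simp: gm_run_def)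
      moreover have "set (take j' xs) \<union> {xs ! j'} = set (take j xs)"
        using \<open>j' < length xs\<close> Suc by (simp add: take_Suc_conv_app_nth)
      ultimately obtain F where "optimal_partial N A pos \<alpha> K (set (take j xs)) F"
        unfolding greedy_choice_def by metis
      then show ?thesis by blast
    qed simp
  qed
  then have "\<forall>j. \<exists>F. j \<le> K \<longrightarrow> optimal_partial N A pos \<alpha> K (set (take j xs)) F" by blast
  from choice[OF this] obtain Ph
    where "\<forall>j. j \<le> K \<longrightarrow> optimal_partial N A pos \<alpha> K (set (take j xs)) (Ph j)" by blast
  then show ?thesis using that by blast
qed

lemma gm_run_approximation:
  assumes "finite N" and run: "gm_run N A pos \<alpha> K xs \<Phi>" and "1 \<le> K"
    and \<Psi>: "monroe_assignment N A K \<Psi>"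
  shows "(1 - 1 / exp 1) * real (ell1 N \<alpha> (card A) pos (\<lambda>i. Some (\<Psi> i)))
    \<le> real (ell1 N \<alpha> (card A) pos \<Phi>)"
proof -
  let ?e = "ell1 N \<alpha> (card A) pos"
  obtain Ph where opt: "\<And>j. j \<le> K \<Longrightarrow> optimal_partial N A pos \<alpha> K (set (take j xs)) (Ph j)"
    using gm_run_optimal_prefixes[OF run] by blast
  have len: "length xs = K" using run by (simp add: gm_run_def)
  have "(1 - 1 / exp 1) * real (?e (\<lambda>i. Some (\<Psi> i))) \<le> real (?e (Ph K))"
  proof (rule gap_shrinking_bound[where v = "\<lambda>j. real (?e (Ph j))"])
    fix j assume "j < K"
    then have "greedy_choice N A pos \<alpha> K (set (take j xs)) (xs ! j)"
      and "set (take (Suc j) xs) = insert (xs ! j) (set (take j xs))"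
      using run len by (auto simp: gm_run_def take_Suc_conv_app_nth)
    then show "real (?e (\<lambda>i. Some (\<Psi> i))) - real (?e (Ph j))
      \<le> real K * (real (?e (Ph (Suc j))) - real (?e (Ph j)))"
      using greedy_choice_gain[OF assms(1) opt _ _ \<Psi>] opt[of "Suc j"] \<open>j < K\<close> by simp
  qed (use \<open>1 \<le> K\<close> in auto)
  moreover have "?e (Ph K) = ?e \<Phi>"
    using optimal_partial_ell1_eq[OF opt[of K]] run len by (simp add: gm_run_def)
  ultimately show ?thesis by simp
qed

lemma gm_run_extends_to_monroe:
  assumes "finite N" and run: "gm_run N A pos \<alpha> K xs \<Phi>" and "1 \<le> K"
  shows "\<exists>\<Psi>. monroe_assignment N A K \<Psi> \<and> (\<forall>i\<in>N. \<Phi> i \<noteq> None \<longrightarrow> \<Phi> i = Some (\<Psi> i))"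
proof -
  have "card (set xs) = K"
    using gm_run_distinct_subset(1)[OF run] run by (simp add: distinct_card gm_run_def)
  then have cap: "card N \<le> card (set xs) * capacity (card N) K"
    using card_le_mult_capacity assms(3) by simp
  have "partial_assignment N (set xs) K \<Phi>" using run by (simp add: gm_run_def optimal_partial_def)
  then obtain \<Phi>' where \<Phi>': "partial_assignment N (set xs) K \<Phi>'" "\<forall>i\<in>N. \<Phi>' i \<noteq> None"
      "\<forall>i\<in>N. \<Phi> i \<noteq> None \<longrightarrow> \<Phi>' i = \<Phi> i"
    using partial_assignment_extends_to_total[OF assms(1) List.finite_set cap] by blast
  then have "monroe_assignment N A K (\<lambda>i. the (\<Phi>' i))"
    using total_partial_assignment_monroe[OF \<Phi>'(1,2) _ gm_run_distinct_subset(2)[OF run]]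
      \<open>card (set xs) = K\<close> by simp
  moreover have "\<forall>i\<in>N. \<Phi> i \<noteq> None \<longrightarrow> \<Phi> i = Some (the (\<Phi>' i))" using \<Phi>'(3) by auto
  ultimately show ?thesis by blast
qed

theorem mainTheorem12:
  fixes N :: "'v set" and A :: "'a set" and pos :: "'v \<Rightarrow> 'a \<Rightarrow> nat"
    and \<alpha> :: "nat \<Rightarrow> nat" and K :: nat and xs :: "'a list" and \<Phi> :: "'v \<Rightarrow> 'a option"
  assumes prof: "valid_profile N A pos"
    and mono: "\<And>j k. 1 \<le> j \<Longrightarrow> j \<le> k \<Longrightarrow> k \<le> card A \<Longrightarrow> \<alpha> k \<le> \<alpha> j"
    and K: "1 \<le> K" "K \<le> card A"
    and run: "gm_run N A pos \<alpha> K xs \<Phi>"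
  shows "(\<exists>\<Psi>. monroe_assignment N A K \<Psi> \<and> (\<forall>i\<in>N. \<Phi> i \<noteq> None \<longrightarrow> \<Phi> i = Some (\<Psi> i)))
    \<and> (\<forall>\<Psi>. monroe_assignment N A K \<Psi> \<longrightarrow>
          real (ell1 N \<alpha> (card A) pos \<Phi>)
            \<ge> (1 - 1 / exp 1) * real (ell1 N \<alpha> (card A) pos (\<lambda>i. Some (\<Psi> i))))"
proof -
  have "finite N" using prof by (simp add: valid_profile_def)
  then show ?thesis
    using gm_run_extends_to_monroe[OF _ run K(1)] gm_run_approximation[OF _ run K(1)] by blast
qed

end
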